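(* Let $k$ be a field of characteristic $\neq2$, let $f\in k[X]$ be separable of degree $6$ with set of roots $\Omega\subset\bar k$, let $l=k(\Omega)$, let $A=k[X]/(f)$, and let $\delta\in A^*$. Let $k'\subseteq\bar k$ be an extension of $k$ containing $l$, and write $A_{k'}=A\otimes_kk'$. For $\omega\in\Omega$ let $\mu_\omega\in A_{k'}$ be the element with $\varphi_\theta(\mu_\omega)=-1$ if $\theta=\omega$ and $\varphi_\theta(\mu_\omega)=1$ otherwise, where $\varphi_\theta:A_{k'}\to k'$ is $X\mapsto\theta$. For $\varepsilon\in A_{k'}$ with $\varepsilon^2=\delta$, let $L_\varepsilon\subset\mathbb{P}(A_{k'})$ be the line corresponding to the subspace $\{\varepsilon^{-1}(sX+t): s,t\in k'\}$; it lies on $V_{f,\delta}$. Let $P_{\varepsilon,\omega}\in L_\varepsilon$ be the point corresponding to $\{s\varepsilon^{-1}(X-\omega): s\in k'\}$. For $\mu\in A_{k'}^*$ let $[\mu]$ denote the automorphism of $\mathbb{P}(A_{k'})$ induced by multiplication by $\mu$. Then: (i) $[\mu_\omega]P_{\varepsilon,\omega}=P_{\varepsilon,\omega}$ for all $\omega\in\Omega$ and all such $\varepsilon$. (ii) For $\varepsilon,\varepsilon'\in A_{k'}$ with $\varepsilon^2=\varepsilon'^2=\delta$, put $L=L_\varepsilon$ and $L'=L_{\varepsilon'}$. The lines $L$ and $L'$ intersect if and only if there exists $\omega\in\Omega$ with $[\mu_\omega]L=L'$. In that case the intersection point is $P_{\varepsilon,\omega}=P_{\varepsilon',\omega}$.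
   Context: $V_{f,\delta}\subset\mathbb{P}(A)$ is the set of classes of nonzero $q$ with $\delta q^2$ in the span of $1,X,X^2$. *)

theory Defs
  imports "HOL-Computational_Algebra.Polynomial"
begin

text \<open>The field k is a subfield K of the field type 'a, which plays the role of k'.
  The algebra A_{k'} = k'[X]/(f) is modelled by polynomials of degree < degree f
  (canonical remainders), with multiplication modulo f.\<close>

definition subfield :: "'a::field set \<Rightarrow> bool" where
  "subfield K \<longleftrightarrow> 0 \<in> K \<and> 1 \<in> K \<and> (\<forall>x\<in>K. \<forall>y\<in>K. x + y \<in> K \<and> x * y \<in> K)
     \<and> (\<forall>x\<in>K. - x \<in> K \<and> inverse x \<in> K)"

definition poly_over :: "'a::field set \<Rightarrow> 'a poly \<Rightarrow> bool" where
  "poly_over K p \<longleftrightarrow> (\<forall>i. coeff p i \<in> K)"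

definition algebraic_over :: "'a::field set \<Rightarrow> 'a \<Rightarrow> bool" where
  "algebraic_over K x \<longleftrightarrow> (\<exists>p. p \<noteq> 0 \<and> poly_over K p \<and> poly p x = 0)"

definition separable_poly :: "'a::field poly \<Rightarrow> bool" where
  "separable_poly f \<longleftrightarrow> coprime f (pderiv f)"

definition Aelem :: "'a::field poly \<Rightarrow> 'a poly \<Rightarrow> bool" where
  "Aelem f p \<longleftrightarrow> degree p < degree f"

definition Amult :: "'a::field poly \<Rightarrow> 'a poly \<Rightarrow> 'a poly \<Rightarrow> 'a poly" where
  "Amult f p q = (p * q) mod f"

definition Ainv :: "'a::field poly \<Rightarrow> 'a poly \<Rightarrow> 'a poly" where
  "Ainv f e = (SOME u. Aelem f u \<and> Amult f u e = 1)"

definition mu :: "'a::field poly \<Rightarrow> 'a \<Rightarrow> 'a poly" where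
  "mu f w = (SOME p. Aelem f p \<and>
     (\<forall>\<theta>. poly f \<theta> = 0 \<longrightarrow> poly p \<theta> = (if \<theta> = w then -1 else 1)))"

text \<open>Linear subspaces of A_{k'} representing the line L_e and the point P_{e,w}.\<close>
definition Lsub :: "'a::field poly \<Rightarrow> 'a poly \<Rightarrow> 'a poly set" where
  "Lsub f e = {Amult f (Ainv f e) [:t, s:] | s t. True}"

definition Psub :: "'a::field poly \<Rightarrow> 'a poly \<Rightarrow> 'a \<Rightarrow> 'a poly set" where
  "Psub f e w = {Amult f (Ainv f e) (smult s [:-w, 1:]) | s. True}"

definition act :: "'a::field poly \<Rightarrow> 'a poly \<Rightarrow> 'a poly set \<Rightarrow> 'a poly set" where
  "act f m S = Amult f m ` S"

end

theory Submission
  imports Defs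
begin

text \<open>
  Since f has deg f distinct roots \<Omega> in k', evaluation at \<Omega> identifies A_k' with the functions
  \<Omega> \<rightarrow> k'. A unit \<epsilon> becomes a nowhere vanishing function, q lies on L_\<epsilon> iff q\<epsilon> is the
  restriction of an affine function \<theta> \<mapsto> s\<theta> + t, and [\<mu>_\<omega>] multiplies by the sign pattern
  that is -1 exactly at \<omega>. Two square roots of \<delta> differ by a sign function \<rho> = \<epsilon>'/\<epsilon>, so
  L_\<epsilon>' is L_\<epsilon> twisted by \<rho>.

  On three or more points an affine function with values \<plusminus>1 is constant, and an affine function
  with two zeros vanishes. Hence [\<mu>_\<omega>]L_\<epsilon> = L_\<epsilon>' iff \<rho> = \<plusminus>\<mu>_\<omega>, and L_\<epsilon> = L_\<epsilon>' iff \<rho> is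
  constant. If q is a nonzero common point of two distinct lines, then q\<epsilon> = s\<theta> + t must vanish
  wherever \<rho> differs from a value it takes twice (this uses char \<noteq> 2); having at most one zero,
  it forces \<rho> to change sign at exactly one root \<omega>, and the common points are then the multiples
  of \<epsilon>\<inverse>(X - \<omega>).
\<close>

section \<open>Affine functions on a finite set\<close>

definition affine_on :: "'a::field set \<Rightarrow> ('a \<Rightarrow> 'a) \<Rightarrow> bool" where
  "affine_on S g \<longleftrightarrow> (\<exists>s t. \<forall>\<theta>\<in>S. g \<theta> = s * \<theta> + t)"

definition flip_at :: "'a::field \<Rightarrow> 'a \<Rightarrow> 'a" where
  "flip_at \<omega> \<theta> = (if \<theta> = \<omega> then -1 else 1)"

lemma affine_on_cong: "(\<And>\<theta>. \<theta> \<in> S \<Longrightarrow> g \<theta> = h \<theta>) \<Longrightarrow> affine_on S g \<longleftrightarrow> affine_on S h"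
  unfolding affine_on_def by simp

lemma affine_on_scale:
  assumes "c \<noteq> 0"
  shows "affine_on S (\<lambda>\<theta>. c * g \<theta>) \<longleftrightarrow> affine_on S g"
proof
  assume "affine_on S (\<lambda>\<theta>. c * g \<theta>)"
  then obtain s t where "\<forall>\<theta>\<in>S. c * g \<theta> = s * \<theta> + t"
    unfolding affine_on_def by blast
  then have "\<forall>\<theta>\<in>S. g \<theta> = (s / c) * \<theta> + t / c"
    using assms by (simp add: field_simps)
  then show "affine_on S g"
    unfolding affine_on_def by blast
next
  assume "affine_on S g"
  then obtain s t where "\<forall>\<theta>\<in>S. g \<theta> = s * \<theta> + t"
    unfolding affine_on_def by blast
  then have "\<forall>\<theta>\<in>S. c * g \<theta> = (c * s) * \<theta> + c * t"
    by (simp add: algebra_simps)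
  then show "affine_on S (\<lambda>\<theta>. c * g \<theta>)"
    unfolding affine_on_def by blast
qed

lemma affine_coeffs_unique:
  fixes a b :: "'a::field"
  assumes "a \<noteq> b" "s * a + t = s' * a + t'" "s * b + t = s' * b + t'"
  shows "s = s' \<and> t = t'"
proof -
  have "(s - s') * (a - b) = ((s * a + t) - (s * b + t)) - ((s' * a + t') - (s' * b + t'))"
    by (simp add: algebra_simps)
  also have "\<dots> = 0"
    using assms(2,3) by simp
  finally have "(s - s') * (a - b) = 0" .
  then have "s = s'"
    using assms(1) by simp
  then show ?thesis
    using assms(2) by simp
qed

lemma affine_on_const_if_eq:
  assumes "affine_on S g" "x \<in> S" "y \<in> S" "x \<noteq> y" "g x = g y"
  shows "\<forall>\<theta>\<in>S. g \<theta> = g x"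
proof -
  obtain s t where st: "\<forall>\<theta>\<in>S. g \<theta> = s * \<theta> + t"
    using assms(1) unfolding affine_on_def by blast
  then have "s * x + t = 0 * x + g x" "s * y + t = 0 * y + g x"
    using assms(2-5) by auto
  then have "s = 0"
    using affine_coeffs_unique[OF assms(4)] by blast
  then show ?thesis
    using st assms(2) by simp
qed

lemma two_valued_not_inj_on:
  assumes "3 \<le> card S" "\<forall>\<theta>\<in>S. g \<theta> \<in> {u, v}"
  obtains x y where "x \<in> S" "y \<in> S" "x \<noteq> y" "g x = g y"
proof -
  have "\<not> inj_on g S"
  proof
    assume "inj_on g S"
    then have "card S = card (g ` S)"
      by (simp add: card_image)
    also have "\<dots> \<le> card {u, v}"
      using assms(2) by (intro card_mono) auto
    also have "\<dots> \<le> 2"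
      by (simp add: card_insert_le_m1)
    finally show False
      using assms(1) by simp
  qed
  then show ?thesis
    using that unfolding inj_on_def by blast
qed

lemma affine_on_sign_const:
  assumes "3 \<le> card S" "affine_on S g" "\<forall>\<theta>\<in>S. g \<theta> \<in> {1, -1}"
  shows "\<exists>c. \<forall>\<theta>\<in>S. g \<theta> = c"
proof -
  obtain x y where "x \<in> S" "y \<in> S" "x \<noteq> y" "g x = g y"
    using two_valued_not_inj_on[OF assms(1,3)] .
  then show ?thesis
    using affine_on_const_if_eq[OF assms(2)] by blast
qed

lemma flip_at_not_const:
  assumes "(2::'a::field) \<noteq> 0" "\<sigma> \<noteq> 0" "\<omega> \<in> S" "a \<in> S" "a \<noteq> \<omega>"
  shows "\<not> (\<forall>\<theta>\<in>S. \<sigma> * flip_at \<omega> \<theta> = (c::'a))"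
proof
  assume "\<forall>\<theta>\<in>S. \<sigma> * flip_at \<omega> \<theta> = c"
  then have "\<sigma> * flip_at \<omega> \<omega> = \<sigma> * flip_at \<omega> a"
    using assms(3,4) by simp
  then have "- \<sigma> = \<sigma>"
    using assms(5) by (simp add: flip_at_def)
  then have "2 * \<sigma> = 0"
    by (simp add: algebra_simps)
  then show False
    using assms(1,2) by simp
qed

lemma flip_at_times_vanishing: "flip_at \<omega> \<theta> * (s * (\<theta> - \<omega>)) = s * (\<theta> - \<omega>)"
  by (simp add: flip_at_def)

lemma affine_on_flip_at_iff:
  fixes S :: "'a::field set"
  assumes "3 \<le> card S" "(2::'a) \<noteq> 0" "\<omega> \<in> S"
  shows "affine_on S g \<and> affine_on S (\<lambda>\<theta>. flip_at \<omega> \<theta> * g \<theta>)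
    \<longleftrightarrow> (\<exists>s. \<forall>\<theta>\<in>S. g \<theta> = s * (\<theta> - \<omega>))"
proof
  assume "affine_on S g \<and> affine_on S (\<lambda>\<theta>. flip_at \<omega> \<theta> * g \<theta>)"
  then obtain s t s' t' where st: "\<forall>\<theta>\<in>S. g \<theta> = s * \<theta> + t"
    and st': "\<forall>\<theta>\<in>S. flip_at \<omega> \<theta> * g \<theta> = s' * \<theta> + t'"
    unfolding affine_on_def by blast
  have "finite S"
    using assms(1) by (intro card_ge_0_finite) simp
  moreover have "\<not> card (S - {\<omega>}) \<le> Suc 0"
    using assms(1,3) by auto
  ultimately obtain a b where ab: "a \<in> S" "b \<in> S" "a \<noteq> \<omega>" "b \<noteq> \<omega>" "a \<noteq> b"
    using card_le_Suc0_iff_eq[of "S - {\<omega>}"] by auto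
  have "s' * a + t' = s * a + t" "s' * b + t' = s * b + t"
    using ab st st' by (metis flip_at_def mult_1)+
  then have "s' = s \<and> t' = t"
    using affine_coeffs_unique[OF ab(5)] by blast
  moreover have "- g \<omega> = s' * \<omega> + t'"
    using bspec[OF st' assms(3)] by (simp add: flip_at_def)
  ultimately have "- (s * \<omega> + t) = s * \<omega> + t"
    using st assms(3) by simp
  then have "2 * (s * \<omega> + t) = 0"
    by (simp add: algebra_simps)
  then have "s * \<omega> + t = 0"
    using assms(2) mult_eq_0_iff by blast
  then have "\<forall>\<theta>\<in>S. g \<theta> = s * (\<theta> - \<omega>)"
    using st by (simp add: algebra_simps add_eq_0_iff2)
  then show "\<exists>s. \<forall>\<theta>\<in>S. g \<theta> = s * (\<theta> - \<omega>)" ..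
next
  assume "\<exists>s. \<forall>\<theta>\<in>S. g \<theta> = s * (\<theta> - \<omega>)"
  then obtain s where s: "\<forall>\<theta>\<in>S. g \<theta> = s * (\<theta> - \<omega>)" ..
  then have "\<forall>\<theta>\<in>S. g \<theta> = s * \<theta> + (- s * \<omega>)"
    by (simp add: algebra_simps)
  then have "affine_on S g"
    unfolding affine_on_def by blast
  moreover have "affine_on S (\<lambda>\<theta>. flip_at \<omega> \<theta> * g \<theta>) \<longleftrightarrow> affine_on S g"
    using s by (intro affine_on_cong) (simp add: flip_at_times_vanishing)
  ultimately show "affine_on S g \<and> affine_on S (\<lambda>\<theta>. flip_at \<omega> \<theta> * g \<theta>)"
    by blast
qed

lemma affine_on_twist_vanishing:
  fixes S :: "'a::field set"
  assumes "(2::'a) \<noteq> 0" "\<forall>\<theta>\<in>S. \<rho> \<theta> \<in> {1, -1}"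
    and "affine_on S g" "affine_on S (\<lambda>\<theta>. \<rho> \<theta> * g \<theta>)"
    and "x \<in> S" "y \<in> S" "x \<noteq> y" "\<rho> x = \<rho> y"
  shows "\<forall>\<theta>\<in>S. \<rho> \<theta> \<noteq> \<rho> x \<longrightarrow> g \<theta> = 0"
proof (intro ballI impI)
  fix \<theta> assume \<theta>: "\<theta> \<in> S" "\<rho> \<theta> \<noteq> \<rho> x"
  obtain s t s' t' where st: "\<forall>\<theta>\<in>S. g \<theta> = s * \<theta> + t"
    and st': "\<forall>\<theta>\<in>S. \<rho> \<theta> * g \<theta> = s' * \<theta> + t'"
    using assms(3,4) unfolding affine_on_def by blast
  have "s' * x + t' = (\<rho> x * s) * x + \<rho> x * t" "s' * y + t' = (\<rho> x * s) * y + \<rho> x * t"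
    using bspec[OF st assms(5)] bspec[OF st' assms(5)] bspec[OF st assms(6)] bspec[OF st' assms(6)]
      assms(8)
    by (simp_all add: algebra_simps)
  then have "s' = \<rho> x * s \<and> t' = \<rho> x * t"
    using affine_coeffs_unique[OF assms(7)] by blast
  moreover have "\<rho> \<theta> = - \<rho> x"
    using bspec[OF assms(2) assms(5)] bspec[OF assms(2) \<theta>(1)] \<theta>(2) by auto
  ultimately have "- \<rho> x * g \<theta> = \<rho> x * g \<theta>"
    using bspec[OF st \<theta>(1)] bspec[OF st' \<theta>(1)] by (simp add: algebra_simps)
  then have "(2 * \<rho> x) * g \<theta> = 0"
    by (simp add: algebra_simps)
  then show "g \<theta> = 0"
    using assms(1,2,5) by auto
qed

lemma affine_on_sign_twist:
  fixes S :: "'a::field set"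
  assumes "3 \<le> card S" "(2::'a) \<noteq> 0" "\<forall>\<theta>\<in>S. \<rho> \<theta> \<in> {1, -1}"
    and "affine_on S g" "affine_on S (\<lambda>\<theta>. \<rho> \<theta> * g \<theta>)" "\<exists>\<theta>\<in>S. g \<theta> \<noteq> 0"
    and "\<not> (\<exists>c. \<forall>\<theta>\<in>S. \<rho> \<theta> = c)"
  shows "\<exists>\<omega>\<in>S. \<exists>\<sigma>\<in>{1, -1}. \<forall>\<theta>\<in>S. \<rho> \<theta> = \<sigma> * flip_at \<omega> \<theta>"
proof -
  obtain x y where xy: "x \<in> S" "y \<in> S" "x \<noteq> y" "\<rho> x = \<rho> y"
    using two_valued_not_inj_on[OF assms(1,3)] .
  define \<sigma> where "\<sigma> = \<rho> x"
  have \<sigma>: "\<sigma> \<in> {1, -1}"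
    using assms(3) xy(1) unfolding \<sigma>_def by blast
  have vanish: "\<forall>\<theta>\<in>S. \<rho> \<theta> \<noteq> \<sigma> \<longrightarrow> g \<theta> = 0"
    unfolding \<sigma>_def using affine_on_twist_vanishing[OF assms(2-5) xy] .
  obtain \<omega> where \<omega>: "\<omega> \<in> S" "\<rho> \<omega> \<noteq> \<sigma>"
    using assms(7) by blast
  have unique: "\<theta> = \<omega>" if "\<theta> \<in> S" "\<rho> \<theta> \<noteq> \<sigma>" for \<theta>
  proof (rule ccontr)
    assume "\<theta> \<noteq> \<omega>"
    then have "\<forall>\<theta>'\<in>S. g \<theta>' = g \<theta>"
      using affine_on_const_if_eq[OF assms(4) that(1) \<omega>(1)] vanish that \<omega> by simp
    then show False
      using assms(6) vanish that by auto
  qed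
  have "\<forall>\<theta>\<in>S. \<rho> \<theta> = \<sigma> * flip_at \<omega> \<theta>"
  proof
    fix \<theta> assume \<theta>: "\<theta> \<in> S"
    show "\<rho> \<theta> = \<sigma> * flip_at \<omega> \<theta>"
    proof (cases "\<theta> = \<omega>")
      case True
      then show ?thesis
        using assms(3) \<sigma> \<omega> by (auto simp: flip_at_def)
    next
      case False
      then have "\<rho> \<theta> = \<sigma>"
        using unique \<theta> by blast
      then show ?thesis
        using False by (simp add: flip_at_def)
    qed
  qed
  then show ?thesis
    using \<omega>(1) \<sigma> by blast
qed

lemma sign_flip_at_vanishing_iff:
  assumes "\<sigma> \<in> {1, -1}" "\<forall>\<theta>\<in>S. \<rho> \<theta> = \<sigma> * flip_at \<omega> \<theta>"
  shows "(\<exists>s. \<forall>\<theta>\<in>S. \<rho> \<theta> * g \<theta> = s * (\<theta> - \<omega>)) \<longleftrightarrow> (\<exists>s. \<forall>\<theta>\<in>S. g \<theta> = s * (\<theta> - \<omega>))"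
proof -
  have twist: "\<rho> \<theta> * (s * (\<theta> - \<omega>)) = (\<sigma> * s) * (\<theta> - \<omega>)" if "\<theta> \<in> S" for \<theta> s
  proof -
    have "\<rho> \<theta> * (s * (\<theta> - \<omega>)) = \<sigma> * (flip_at \<omega> \<theta> * (s * (\<theta> - \<omega>)))"
      using assms(2) that by (simp add: mult.assoc)
    then show ?thesis
      by (simp add: flip_at_times_vanishing mult.assoc)
  qed
  have square: "\<rho> \<theta> * \<rho> \<theta> = 1" if "\<theta> \<in> S" for \<theta>
    using assms that by (auto simp: flip_at_def)
  show ?thesis
  proof
    assume "\<exists>s. \<forall>\<theta>\<in>S. \<rho> \<theta> * g \<theta> = s * (\<theta> - \<omega>)"
    then obtain s where s: "\<forall>\<theta>\<in>S. \<rho> \<theta> * g \<theta> = s * (\<theta> - \<omega>)" ..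
    have "g \<theta> = (\<sigma> * s) * (\<theta> - \<omega>)" if "\<theta> \<in> S" for \<theta>
    proof -
      have "g \<theta> = \<rho> \<theta> * (\<rho> \<theta> * g \<theta>)"
        using square[OF that] by (simp flip: mult.assoc)
      then show ?thesis
        using s twist that by simp
    qed
    then show "\<exists>s. \<forall>\<theta>\<in>S. g \<theta> = s * (\<theta> - \<omega>)"
      by blast
  next
    assume "\<exists>s. \<forall>\<theta>\<in>S. g \<theta> = s * (\<theta> - \<omega>)"
    then obtain s where "\<forall>\<theta>\<in>S. g \<theta> = s * (\<theta> - \<omega>)" ..
    then have "\<forall>\<theta>\<in>S. \<rho> \<theta> * g \<theta> = (\<sigma> * s) * (\<theta> - \<omega>)"
      using twist by simp
    then show "\<exists>s. \<forall>\<theta>\<in>S. \<rho> \<theta> * g \<theta> = s * (\<theta> - \<omega>)"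
      by blast
  qed
qed

section \<open>The algebra k'[X]/(f) for f with deg f distinct roots\<close>

lemma poly_Amult: "poly f \<theta> = 0 \<Longrightarrow> poly (Amult f p q) \<theta> = poly p \<theta> * poly q \<theta>"
  by (simp add: Amult_def poly_mod)

definition Aunit :: "'a::field poly \<Rightarrow> 'a poly \<Rightarrow> bool" where
  "Aunit f e \<longleftrightarrow> (\<exists>u. Aelem f u \<and> Amult f u e = 1)"

locale split_separable =
  fixes f :: "'a::field poly"
  assumes degree_pos: "0 < degree f"
    and card_roots: "card {\<theta>. poly f \<theta> = 0} = degree f"
begin

abbreviation \<Omega> :: "'a set" where
  "\<Omega> \<equiv> {\<theta>. poly f \<theta> = 0}"

lemma f_nonzero: "f \<noteq> 0"
  using degree_pos by auto

lemma Aelem_Amult: "Aelem f (Amult f p q)"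
  using degree_pos degree_mod_less'[OF f_nonzero] unfolding Aelem_def Amult_def
  by (cases "p * q mod f = 0") auto

lemma Aelem_eqI:
  assumes "Aelem f p" "Aelem f q" "\<And>\<theta>. \<theta> \<in> \<Omega> \<Longrightarrow> poly p \<theta> = poly q \<theta>"
  shows "p = q"
  using assms card_roots by (intro poly_eqI_degree[of \<Omega>]) (auto simp: Aelem_def)

lemma Aunit_Amult_right:
  assumes "Aunit f (Amult f a b)"
  shows "Aunit f b"
proof -
  obtain u where "Aelem f u" "Amult f u (Amult f a b) = 1"
    using assms unfolding Aunit_def by blast
  then have "Amult f (Amult f u a) b = 1"
    by (simp add: Amult_def mod_mult_left_eq mod_mult_right_eq mult.assoc)
  then show ?thesis
    unfolding Aunit_def using Aelem_Amult by blast
qed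

lemma Aelem_Ainv: "Aunit f e \<Longrightarrow> Aelem f (Ainv f e)"
  unfolding Aunit_def Ainv_def by (rule someI2_ex) auto

lemma Amult_Ainv: "Aunit f e \<Longrightarrow> Amult f (Ainv f e) e = 1"
  unfolding Aunit_def Ainv_def by (rule someI2_ex) auto

lemma poly_Ainv:
  assumes "Aunit f e" "\<theta> \<in> \<Omega>"
  shows "poly (Ainv f e) \<theta> * poly e \<theta> = 1"
  using poly_Amult[of f \<theta> "Ainv f e" e] Amult_Ainv[OF assms(1)] assms(2) by simp

lemma poly_Aunit_nonzero: "Aunit f e \<Longrightarrow> \<theta> \<in> \<Omega> \<Longrightarrow> poly e \<theta> \<noteq> 0"
  using poly_Ainv by fastforce

lemma Amult_Ainv_eq_iff:
  assumes "Aunit f e" "Aelem f q"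
  shows "q = Amult f (Ainv f e) p \<longleftrightarrow> (\<forall>\<theta>\<in>\<Omega>. poly q \<theta> * poly e \<theta> = poly p \<theta>)"
proof
  assume q: "q = Amult f (Ainv f e) p"
  show "\<forall>\<theta>\<in>\<Omega>. poly q \<theta> * poly e \<theta> = poly p \<theta>"
  proof
    fix \<theta> assume \<theta>: "\<theta> \<in> \<Omega>"
    have "poly q \<theta> * poly e \<theta> = (poly (Ainv f e) \<theta> * poly e \<theta>) * poly p \<theta>"
      using q \<theta> by (simp add: poly_Amult)
    then show "poly q \<theta> * poly e \<theta> = poly p \<theta>"
      using poly_Ainv[OF assms(1) \<theta>] by simp
  qed
next
  assume p: "\<forall>\<theta>\<in>\<Omega>. poly q \<theta> * poly e \<theta> = poly p \<theta>"
  show "q = Amult f (Ainv f e) p"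
  proof (rule Aelem_eqI[OF assms(2) Aelem_Amult])
    fix \<theta> assume \<theta>: "\<theta> \<in> \<Omega>"
    have "poly q \<theta> = poly (Ainv f e) \<theta> * (poly q \<theta> * poly e \<theta>)"
      using poly_Ainv[OF assms(1) \<theta>] by (simp add: algebra_simps)
    also have "\<dots> = poly (Ainv f e) \<theta> * poly p \<theta>"
      using bspec[OF p \<theta>] by simp
    finally show "poly q \<theta> = poly (Amult f (Ainv f e) p) \<theta>"
      using \<theta> by (simp add: poly_Amult)
  qed
qed

lemma Lsub_eq:
  assumes "Aunit f e"
  shows "Lsub f e = {q. Aelem f q \<and> affine_on \<Omega> (\<lambda>\<theta>. poly q \<theta> * poly e \<theta>)}"
proof (intro set_eqI iffI)
  fix q assume "q \<in> Lsub f e"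
  then obtain s t where q: "q = Amult f (Ainv f e) [:t, s:]"
    unfolding Lsub_def by blast
  then have "\<forall>\<theta>\<in>\<Omega>. poly q \<theta> * poly e \<theta> = poly [:t, s:] \<theta>"
    using Amult_Ainv_eq_iff[OF assms, of q] Aelem_Amult by blast
  then have "\<forall>\<theta>\<in>\<Omega>. poly q \<theta> * poly e \<theta> = s * \<theta> + t"
    by (simp add: algebra_simps)
  then show "q \<in> {q. Aelem f q \<and> affine_on \<Omega> (\<lambda>\<theta>. poly q \<theta> * poly e \<theta>)}"
    unfolding affine_on_def using q Aelem_Amult by blast
next
  fix q assume "q \<in> {q. Aelem f q \<and> affine_on \<Omega> (\<lambda>\<theta>. poly q \<theta> * poly e \<theta>)}"
  then obtain s t where q: "Aelem f q" and st: "\<forall>\<theta>\<in>\<Omega>. poly q \<theta> * poly e \<theta> = s * \<theta> + t"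
    unfolding affine_on_def by blast
  then have "q = Amult f (Ainv f e) [:t, s:]"
    using Amult_Ainv_eq_iff[OF assms q] by (simp add: algebra_simps)
  then show "q \<in> Lsub f e"
    unfolding Lsub_def by blast
qed

lemma Psub_eq:
  assumes "Aunit f e"
  shows "Psub f e \<omega> = {q. Aelem f q \<and> (\<exists>s. \<forall>\<theta>\<in>\<Omega>. poly q \<theta> * poly e \<theta> = s * (\<theta> - \<omega>))}"
proof (intro set_eqI iffI)
  fix q assume "q \<in> Psub f e \<omega>"
  then obtain s where q: "q = Amult f (Ainv f e) (smult s [:-\<omega>, 1:])"
    unfolding Psub_def by blast
  then have "\<forall>\<theta>\<in>\<Omega>. poly q \<theta> * poly e \<theta> = poly (smult s [:-\<omega>, 1:]) \<theta>"
    using Amult_Ainv_eq_iff[OF assms, of q] Aelem_Amult by blast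
  then have "\<forall>\<theta>\<in>\<Omega>. poly q \<theta> * poly e \<theta> = s * (\<theta> - \<omega>)"
    by (simp add: algebra_simps)
  then show "q \<in> {q. Aelem f q \<and> (\<exists>s. \<forall>\<theta>\<in>\<Omega>. poly q \<theta> * poly e \<theta> = s * (\<theta> - \<omega>))}"
    using q Aelem_Amult by blast
next
  fix q assume "q \<in> {q. Aelem f q \<and> (\<exists>s. \<forall>\<theta>\<in>\<Omega>. poly q \<theta> * poly e \<theta> = s * (\<theta> - \<omega>))}"
  then obtain s where q: "Aelem f q" and s: "\<forall>\<theta>\<in>\<Omega>. poly q \<theta> * poly e \<theta> = s * (\<theta> - \<omega>)"
    by blast
  then have "q = Amult f (Ainv f e) (smult s [:-\<omega>, 1:])"
    using Amult_Ainv_eq_iff[OF assms q] by (simp add: algebra_simps)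
  then show "q \<in> Psub f e \<omega>"
    unfolding Psub_def by blast
qed

lemma flip_at_interpolant:
  assumes "\<omega> \<in> \<Omega>"
  shows "\<exists>p. Aelem f p \<and> (\<forall>\<theta>\<in>\<Omega>. poly p \<theta> = flip_at \<omega> \<theta>)"
proof -
  define g where "g = f div [:-\<omega>, 1:]"
  have "[:-\<omega>, 1:] dvd f"
    using assms by (simp add: poly_eq_0_iff_dvd)
  then have f_eq: "f = [:-\<omega>, 1:] * g"
    unfolding g_def by (rule dvd_mult_div_cancel[symmetric])
  have "g \<noteq> 0"
    using f_eq f_nonzero by auto
  have "degree f = degree [:-\<omega>, 1:] + degree g"
    by (subst f_eq, rule degree_mult_eq) (use \<open>g \<noteq> 0\<close> in auto)
  then have degree_g: "degree f = Suc (degree g)"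
    by simp
  have g_vanishes: "poly g \<theta> = 0" if "\<theta> \<in> \<Omega>" "\<theta> \<noteq> \<omega>" for \<theta>
    using that f_eq by simp
  have "poly g \<omega> \<noteq> 0"
  proof
    assume "poly g \<omega> = 0"
    then have "\<Omega> \<subseteq> {\<theta>. poly g \<theta> = 0}"
      using g_vanishes by blast
    then have "card \<Omega> \<le> degree g"
      using card_mono[OF poly_roots_finite[OF \<open>g \<noteq> 0\<close>]] card_poly_roots_bound[OF \<open>g \<noteq> 0\<close>]
      by (meson order_trans)
    then show False
      using card_roots degree_g by simp
  qed
  define p where "p = 1 - smult (2 / poly g \<omega>) g"
  have "degree p \<le> degree g"
    unfolding p_def by (rule degree_diff_le) auto
  then have "Aelem f p"
    using degree_g by (simp add: Aelem_def)
  moreover have "\<forall>\<theta>\<in>\<Omega>. poly p \<theta> = flip_at \<omega> \<theta>"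
    using \<open>poly g \<omega> \<noteq> 0\<close> g_vanishes by (simp add: p_def flip_at_def)
  ultimately show ?thesis
    by blast
qed

lemma Aelem_mu: "\<omega> \<in> \<Omega> \<Longrightarrow> Aelem f (mu f \<omega>)"
  using someI_ex[OF flip_at_interpolant] unfolding mu_def flip_at_def by simp

lemma poly_mu: "\<omega> \<in> \<Omega> \<Longrightarrow> \<forall>\<theta>\<in>\<Omega>. poly (mu f \<omega>) \<theta> = flip_at \<omega> \<theta>"
  using someI_ex[OF flip_at_interpolant] unfolding mu_def flip_at_def by simp

lemma act_involution_eq:
  assumes "Aelem f m" "\<forall>\<theta>\<in>\<Omega>. poly m \<theta> * poly m \<theta> = 1" "S \<subseteq> Collect (Aelem f)"
  shows "act f m S = {q. Aelem f q \<and> Amult f m q \<in> S}"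
proof -
  have involution: "Amult f m (Amult f m q) = q" if "Aelem f q" for q
    using assms(2) by (intro Aelem_eqI[OF Aelem_Amult that]) (simp add: poly_Amult mult.assoc[symmetric])
  show ?thesis
  proof (intro set_eqI iffI)
    fix q assume "q \<in> act f m S"
    then obtain p where "p \<in> S" "q = Amult f m p"
      unfolding act_def by blast
    then show "q \<in> {q. Aelem f q \<and> Amult f m q \<in> S}"
      using assms(3) involution Aelem_Amult by auto
  next
    fix q assume q: "q \<in> {q. Aelem f q \<and> Amult f m q \<in> S}"
    then have "q = Amult f m (Amult f m q)"
      using involution by simp
    then show "q \<in> act f m S"
      unfolding act_def using q by blast
  qed
qed

lemma act_mu_Lsub:
  assumes "Aunit f e" "\<omega> \<in> \<Omega>"
  shows "act f (mu f \<omega>) (Lsub f e)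
    = {q. Aelem f q \<and> affine_on \<Omega> (\<lambda>\<theta>. flip_at \<omega> \<theta> * (poly q \<theta> * poly e \<theta>))}"
proof -
  have "\<forall>\<theta>\<in>\<Omega>. poly (mu f \<omega>) \<theta> * poly (mu f \<omega>) \<theta> = 1"
    using poly_mu[OF assms(2)] by (simp add: flip_at_def)
  then have "act f (mu f \<omega>) (Lsub f e) = {q. Aelem f q \<and> Amult f (mu f \<omega>) q \<in> Lsub f e}"
    using Aelem_mu[OF assms(2)] Lsub_eq[OF assms(1)] by (intro act_involution_eq) auto
  also have "\<dots> = {q. Aelem f q \<and> affine_on \<Omega> (\<lambda>\<theta>. flip_at \<omega> \<theta> * (poly q \<theta> * poly e \<theta>))}"
  proof -
    have "affine_on \<Omega> (\<lambda>\<theta>. poly (Amult f (mu f \<omega>) q) \<theta> * poly e \<theta>)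
      \<longleftrightarrow> affine_on \<Omega> (\<lambda>\<theta>. flip_at \<omega> \<theta> * (poly q \<theta> * poly e \<theta>))" for q
      using poly_mu[OF assms(2)] by (intro affine_on_cong) (simp add: poly_Amult)
    then show ?thesis
      by (simp add: Lsub_eq[OF assms(1)] Aelem_Amult)
  qed
  finally show ?thesis .
qed

lemma act_mu_Psub:
  assumes "Aunit f e" "\<omega> \<in> \<Omega>"
  shows "act f (mu f \<omega>) (Psub f e \<omega>) = Psub f e \<omega>"
proof -
  have fixed: "Amult f (mu f \<omega>) q = q" if q_mem: "q \<in> Psub f e \<omega>" for q
  proof -
    obtain s where q: "Aelem f q" and s: "\<forall>\<theta>\<in>\<Omega>. poly q \<theta> * poly e \<theta> = s * (\<theta> - \<omega>)"
      using q_mem unfolding Psub_eq[OF assms(1)] by blast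
    have "poly q \<omega> * poly e \<omega> = 0"
      using bspec[OF s assms(2)] by simp
    then have "poly q \<omega> = 0"
      using poly_Aunit_nonzero[OF assms] by simp
    then have "flip_at \<omega> \<theta> * poly q \<theta> = poly q \<theta>" for \<theta>
      by (cases "\<theta> = \<omega>") (simp_all add: flip_at_def)
    then show ?thesis
      using poly_mu[OF assms(2)] by (intro Aelem_eqI[OF Aelem_Amult q]) (simp add: poly_Amult)
  qed
  have "act f (mu f \<omega>) (Psub f e \<omega>) = (\<lambda>q. q) ` Psub f e \<omega>"
    unfolding act_def using fixed by (rule image_cong[OF refl])
  then show ?thesis
    by simp
qed

lemma Ainv_mem_Lsub:
  assumes "Aunit f e"
  shows "Ainv f e \<in> Lsub f e"
proof -
  have "\<forall>\<theta>\<in>\<Omega>. poly (Ainv f e) \<theta> * poly e \<theta> = 0 * \<theta> + 1"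
    using poly_Ainv[OF assms] by simp
  then show ?thesis
    unfolding Lsub_eq[OF assms] affine_on_def using Aelem_Ainv[OF assms] by blast
qed

lemma Psub_has_nonzero:
  assumes "Aunit f e" "a \<in> \<Omega>" "a \<noteq> \<omega>"
  shows "\<exists>q\<in>Psub f e \<omega>. q \<noteq> 0"
proof -
  define q where "q = Amult f (Ainv f e) (smult 1 [:-\<omega>, 1:])"
  have "q \<in> Psub f e \<omega>"
    unfolding q_def Psub_def by blast
  moreover have "poly q a * poly e a = (poly (Ainv f e) a * poly e a) * (a - \<omega>)"
    using assms(2) unfolding q_def by (simp add: poly_Amult algebra_simps)
  then have "poly q a * poly e a = a - \<omega>"
    using poly_Ainv[OF assms(1,2)] by simp
  then have "q \<noteq> 0"
    using assms(3) by auto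
  ultimately show ?thesis
    by blast
qed

end

section \<open>Two square roots of \<delta>\<close>

locale sqrt_pair = split_separable f for f :: "'a::field poly" +
  fixes \<epsilon> \<epsilon>' :: "'a poly"
  assumes Aunit_eps: "Aunit f \<epsilon>" and Aunit_eps': "Aunit f \<epsilon>'"
    and same_square: "Amult f \<epsilon> \<epsilon> = Amult f \<epsilon>' \<epsilon>'"
    and three_le_degree: "3 \<le> degree f"
    and two_nonzero: "(2::'a) \<noteq> 0"
begin

definition \<rho> :: "'a \<Rightarrow> 'a" where
  "\<rho> \<theta> = poly \<epsilon>' \<theta> / poly \<epsilon> \<theta>"

lemma three_le_card_roots: "3 \<le> card \<Omega>"
  using card_roots three_le_degree by simp

lemma other_root:
  obtains a where "a \<in> \<Omega>" "a \<noteq> \<omega>"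
proof -
  have "\<not> \<Omega> \<subseteq> {\<omega>}"
    using card_mono[of "{\<omega>}" \<Omega>] three_le_card_roots by auto
  then show ?thesis
    using that by blast
qed

lemma rho_sign: "\<forall>\<theta>\<in>\<Omega>. \<rho> \<theta> \<in> {1, -1}"
proof
  fix \<theta> assume \<theta>: "\<theta> \<in> \<Omega>"
  have "poly \<epsilon>' \<theta> * poly \<epsilon>' \<theta> = poly \<epsilon> \<theta> * poly \<epsilon> \<theta>"
    using arg_cong[OF same_square, of "\<lambda>p. poly p \<theta>"] \<theta> by (simp add: poly_Amult)
  then have "poly \<epsilon>' \<theta> = poly \<epsilon> \<theta> \<or> poly \<epsilon>' \<theta> = - poly \<epsilon> \<theta>"
    by (simp add: square_eq_iff)
  then show "\<rho> \<theta> \<in> {1, -1}"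
    using poly_Aunit_nonzero[OF Aunit_eps \<theta>] by (auto simp: \<rho>_def)
qed

lemma poly_eps': "\<theta> \<in> \<Omega> \<Longrightarrow> poly \<epsilon>' \<theta> = \<rho> \<theta> * poly \<epsilon> \<theta>"
  using poly_Aunit_nonzero[OF Aunit_eps] by (simp add: \<rho>_def)

lemma Lsub_eps':
  "Lsub f \<epsilon>' = {q. Aelem f q \<and> affine_on \<Omega> (\<lambda>\<theta>. \<rho> \<theta> * (poly q \<theta> * poly \<epsilon> \<theta>))}"
proof -
  have "affine_on \<Omega> (\<lambda>\<theta>. poly q \<theta> * poly \<epsilon>' \<theta>) \<longleftrightarrow> affine_on \<Omega> (\<lambda>\<theta>. \<rho> \<theta> * (poly q \<theta> * poly \<epsilon> \<theta>))" for q
    by (intro affine_on_cong) (simp add: poly_eps')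
  then show ?thesis
    by (simp add: Lsub_eq[OF Aunit_eps'])
qed

lemma rho_eq_sign_flip_if_act_mu:
  assumes "\<omega> \<in> \<Omega>" "act f (mu f \<omega>) (Lsub f \<epsilon>) = Lsub f \<epsilon>'"
  shows "\<exists>\<sigma>\<in>{1, -1}. \<forall>\<theta>\<in>\<Omega>. \<rho> \<theta> = \<sigma> * flip_at \<omega> \<theta>"
proof -
  define q where "q = Amult f (mu f \<omega>) (Ainv f \<epsilon>)"
  have "q \<in> Lsub f \<epsilon>'"
    using Ainv_mem_Lsub[OF Aunit_eps] assms(2) unfolding act_def q_def by blast
  then have "affine_on \<Omega> (\<lambda>\<theta>. \<rho> \<theta> * (poly q \<theta> * poly \<epsilon> \<theta>))"
    unfolding Lsub_eps' by blast
  moreover have q_eps: "poly q \<theta> * poly \<epsilon> \<theta> = flip_at \<omega> \<theta>" if "\<theta> \<in> \<Omega>" for \<theta>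
  proof -
    have "poly q \<theta> * poly \<epsilon> \<theta> = poly (mu f \<omega>) \<theta> * (poly (Ainv f \<epsilon>) \<theta> * poly \<epsilon> \<theta>)"
      using that by (simp add: q_def poly_Amult mult.assoc)
    also have "\<dots> = flip_at \<omega> \<theta> * 1"
      by (simp only: bspec[OF poly_mu[OF assms(1)] that] poly_Ainv[OF Aunit_eps that])
    finally show ?thesis
      by simp
  qed
  ultimately have "affine_on \<Omega> (\<lambda>\<theta>. \<rho> \<theta> * flip_at \<omega> \<theta>)"
    by (subst (asm) affine_on_cong) (simp_all add: q_eps)
  moreover have "\<forall>\<theta>\<in>\<Omega>. \<rho> \<theta> * flip_at \<omega> \<theta> \<in> {1, -1}"
    using rho_sign by (auto simp: flip_at_def)
  ultimately obtain \<sigma> where \<sigma>: "\<forall>\<theta>\<in>\<Omega>. \<rho> \<theta> * flip_at \<omega> \<theta> = \<sigma>"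
    using affine_on_sign_const[OF three_le_card_roots] by blast
  then have "\<forall>\<theta>\<in>\<Omega>. \<rho> \<theta> = \<sigma> * flip_at \<omega> \<theta>"
    by (auto simp: flip_at_def)
  moreover have "\<sigma> = - \<rho> \<omega>"
    using bspec[OF \<sigma> assms(1)] by (simp add: flip_at_def)
  then have "\<sigma> \<in> {1, -1}"
    using bspec[OF rho_sign assms(1)] by auto
  ultimately show "\<exists>\<sigma>\<in>{1, -1}. \<forall>\<theta>\<in>\<Omega>. \<rho> \<theta> = \<sigma> * flip_at \<omega> \<theta>"
    by blast
qed

lemma Lsub_eq_iff_rho_const: "Lsub f \<epsilon> = Lsub f \<epsilon>' \<longleftrightarrow> (\<exists>c. \<forall>\<theta>\<in>\<Omega>. \<rho> \<theta> = c)"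
proof
  assume "Lsub f \<epsilon> = Lsub f \<epsilon>'"
  then have "affine_on \<Omega> (\<lambda>\<theta>. \<rho> \<theta> * (poly (Ainv f \<epsilon>) \<theta> * poly \<epsilon> \<theta>))"
    using Ainv_mem_Lsub[OF Aunit_eps] unfolding Lsub_eps' by blast
  then have "affine_on \<Omega> \<rho>"
    by (subst (asm) affine_on_cong) (simp_all add: poly_Ainv[OF Aunit_eps])
  then show "\<exists>c. \<forall>\<theta>\<in>\<Omega>. \<rho> \<theta> = c"
    using affine_on_sign_const[OF three_le_card_roots _ rho_sign] by blast
next
  assume "\<exists>c. \<forall>\<theta>\<in>\<Omega>. \<rho> \<theta> = c"
  then obtain c where c: "\<forall>\<theta>\<in>\<Omega>. \<rho> \<theta> = c" ..
  obtain a where "a \<in> \<Omega>"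
    using other_root by blast
  then have "c \<noteq> 0"
    using c rho_sign by force
  have "affine_on \<Omega> (\<lambda>\<theta>. \<rho> \<theta> * g \<theta>) \<longleftrightarrow> affine_on \<Omega> (\<lambda>\<theta>. c * g \<theta>)" for g
    using c by (intro affine_on_cong) simp
  then have "affine_on \<Omega> (\<lambda>\<theta>. \<rho> \<theta> * g \<theta>) \<longleftrightarrow> affine_on \<Omega> g" for g
    using affine_on_scale[OF \<open>c \<noteq> 0\<close>] by simp
  then show "Lsub f \<epsilon> = Lsub f \<epsilon>'"
    unfolding Lsub_eq[OF Aunit_eps] Lsub_eps' by simp
qed

context
  fixes \<omega> \<sigma> :: 'a
  assumes root: "\<omega> \<in> \<Omega>" and sign: "\<sigma> \<in> {1, -1}"
    and rho_flip: "\<forall>\<theta>\<in>\<Omega>. \<rho> \<theta> = \<sigma> * flip_at \<omega> \<theta>"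
begin

lemma affine_on_rho_iff_flip:
  "affine_on \<Omega> (\<lambda>\<theta>. \<rho> \<theta> * g \<theta>) \<longleftrightarrow> affine_on \<Omega> (\<lambda>\<theta>. flip_at \<omega> \<theta> * g \<theta>)"
proof -
  have "affine_on \<Omega> (\<lambda>\<theta>. \<rho> \<theta> * g \<theta>) \<longleftrightarrow> affine_on \<Omega> (\<lambda>\<theta>. \<sigma> * (flip_at \<omega> \<theta> * g \<theta>))"
    using rho_flip by (intro affine_on_cong) (simp add: mult.assoc)
  also have "\<dots> \<longleftrightarrow> affine_on \<Omega> (\<lambda>\<theta>. flip_at \<omega> \<theta> * g \<theta>)"
    using sign by (intro affine_on_scale) auto
  finally show ?thesis .
qed

lemma act_mu_Lsub_eq_Lsub_eps': "act f (mu f \<omega>) (Lsub f \<epsilon>) = Lsub f \<epsilon>'"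
  unfolding act_mu_Lsub[OF Aunit_eps root] Lsub_eps' by (simp add: affine_on_rho_iff_flip)

lemma Lsub_inter_eq_Psub: "Lsub f \<epsilon> \<inter> Lsub f \<epsilon>' = Psub f \<epsilon> \<omega>"
proof -
  have "affine_on \<Omega> (\<lambda>\<theta>. poly q \<theta> * poly \<epsilon> \<theta>) \<and> affine_on \<Omega> (\<lambda>\<theta>. \<rho> \<theta> * (poly q \<theta> * poly \<epsilon> \<theta>))
    \<longleftrightarrow> (\<exists>s. \<forall>\<theta>\<in>\<Omega>. poly q \<theta> * poly \<epsilon> \<theta> = s * (\<theta> - \<omega>))" for q
    using affine_on_rho_iff_flip[of "\<lambda>\<theta>. poly q \<theta> * poly \<epsilon> \<theta>"]
      affine_on_flip_at_iff[OF three_le_card_roots two_nonzero root, of "\<lambda>\<theta>. poly q \<theta> * poly \<epsilon> \<theta>"]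
    by simp
  then show ?thesis
    unfolding Lsub_eq[OF Aunit_eps] Lsub_eps' Psub_eq[OF Aunit_eps] by blast
qed

lemma Psub_eps'_eq: "Psub f \<epsilon>' \<omega> = Psub f \<epsilon> \<omega>"
proof -
  have "(\<exists>s. \<forall>\<theta>\<in>\<Omega>. poly q \<theta> * poly \<epsilon>' \<theta> = s * (\<theta> - \<omega>))
    \<longleftrightarrow> (\<exists>s. \<forall>\<theta>\<in>\<Omega>. \<rho> \<theta> * (poly q \<theta> * poly \<epsilon> \<theta>) = s * (\<theta> - \<omega>))" for q
    by (simp add: poly_eps' mult.left_commute)
  then show ?thesis
    unfolding Psub_eq[OF Aunit_eps] Psub_eq[OF Aunit_eps']
    using sign_flip_at_vanishing_iff[OF sign rho_flip] by simp
qed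

end

lemma act_mu_Lsub_eq_iff:
  assumes "\<omega> \<in> \<Omega>"
  shows "act f (mu f \<omega>) (Lsub f \<epsilon>) = Lsub f \<epsilon>' \<longleftrightarrow> (\<exists>\<sigma>\<in>{1, -1}. \<forall>\<theta>\<in>\<Omega>. \<rho> \<theta> = \<sigma> * flip_at \<omega> \<theta>)"
  using assms rho_eq_sign_flip_if_act_mu act_mu_Lsub_eq_Lsub_eps' by blast

lemma lines_meet_iff:
  "(Lsub f \<epsilon> \<noteq> Lsub f \<epsilon>' \<and> (\<exists>q. q \<noteq> 0 \<and> q \<in> Lsub f \<epsilon> \<inter> Lsub f \<epsilon>'))
    \<longleftrightarrow> (\<exists>\<omega>\<in>\<Omega>. act f (mu f \<omega>) (Lsub f \<epsilon>) = Lsub f \<epsilon>')"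
proof
  assume "Lsub f \<epsilon> \<noteq> Lsub f \<epsilon>' \<and> (\<exists>q. q \<noteq> 0 \<and> q \<in> Lsub f \<epsilon> \<inter> Lsub f \<epsilon>')"
  then obtain q where "q \<noteq> 0" "q \<in> Lsub f \<epsilon> \<inter> Lsub f \<epsilon>'" and rho_nonconst: "\<not> (\<exists>c. \<forall>\<theta>\<in>\<Omega>. \<rho> \<theta> = c)"
    using Lsub_eq_iff_rho_const by blast
  then have q: "Aelem f q" "affine_on \<Omega> (\<lambda>\<theta>. poly q \<theta> * poly \<epsilon> \<theta>)"
      "affine_on \<Omega> (\<lambda>\<theta>. \<rho> \<theta> * (poly q \<theta> * poly \<epsilon> \<theta>))"
    unfolding Lsub_eq[OF Aunit_eps] Lsub_eps' by auto
  have "\<exists>\<theta>\<in>\<Omega>. poly q \<theta> * poly \<epsilon> \<theta> \<noteq> 0"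
  proof (rule ccontr)
    assume "\<not> (\<exists>\<theta>\<in>\<Omega>. poly q \<theta> * poly \<epsilon> \<theta> \<noteq> 0)"
    then have "q = 0"
      using poly_Aunit_nonzero[OF Aunit_eps] degree_pos
      by (intro Aelem_eqI[OF q(1)]) (auto simp: Aelem_def)
    then show False
      using \<open>q \<noteq> 0\<close> by contradiction
  qed
  then obtain \<omega> where "\<omega> \<in> \<Omega>" "\<exists>\<sigma>\<in>{1, -1}. \<forall>\<theta>\<in>\<Omega>. \<rho> \<theta> = \<sigma> * flip_at \<omega> \<theta>"
    using affine_on_sign_twist[OF three_le_card_roots two_nonzero rho_sign q(2,3) _ rho_nonconst] by blast
  then show "\<exists>\<omega>\<in>\<Omega>. act f (mu f \<omega>) (Lsub f \<epsilon>) = Lsub f \<epsilon>'"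
    using act_mu_Lsub_eq_iff by blast
next
  assume "\<exists>\<omega>\<in>\<Omega>. act f (mu f \<omega>) (Lsub f \<epsilon>) = Lsub f \<epsilon>'"
  then obtain \<omega> \<sigma> where \<omega>: "\<omega> \<in> \<Omega>" and \<sigma>: "\<sigma> \<in> {1, -1}" "\<forall>\<theta>\<in>\<Omega>. \<rho> \<theta> = \<sigma> * flip_at \<omega> \<theta>"
    using act_mu_Lsub_eq_iff by blast
  obtain a where a: "a \<in> \<Omega>" "a \<noteq> \<omega>"
    using other_root by blast
  have "\<sigma> \<noteq> 0"
    using \<sigma>(1) by auto
  then have "\<not> (\<exists>c. \<forall>\<theta>\<in>\<Omega>. \<rho> \<theta> = c)"
    using flip_at_not_const[OF two_nonzero _ \<omega> a] \<sigma>(2) by simp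
  then have "Lsub f \<epsilon> \<noteq> Lsub f \<epsilon>'"
    unfolding Lsub_eq_iff_rho_const .
  moreover have "\<exists>q. q \<noteq> 0 \<and> q \<in> Lsub f \<epsilon> \<inter> Lsub f \<epsilon>'"
    using Psub_has_nonzero[OF Aunit_eps a] Lsub_inter_eq_Psub[OF \<omega> \<sigma>] by blast
  ultimately show "Lsub f \<epsilon> \<noteq> Lsub f \<epsilon>' \<and> (\<exists>q. q \<noteq> 0 \<and> q \<in> Lsub f \<epsilon> \<inter> Lsub f \<epsilon>')" ..
qed

lemma lines_meet_at:
  assumes "\<omega> \<in> \<Omega>" "act f (mu f \<omega>) (Lsub f \<epsilon>) = Lsub f \<epsilon>'"
  shows "Lsub f \<epsilon> \<inter> Lsub f \<epsilon>' = Psub f \<epsilon> \<omega> \<and> Psub f \<epsilon> \<omega> = Psub f \<epsilon>' \<omega>"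
  using assms act_mu_Lsub_eq_iff Lsub_inter_eq_Psub Psub_eps'_eq by metis

end

theorem proposition2p13:
  fixes K :: "'a::field set" and f \<delta> :: "'a poly"
  assumes "subfield K"
    and "\<forall>x. algebraic_over K x"
    and "(2::'a) \<noteq> 0"
    and "poly_over K f" and "degree f = 6" and "separable_poly f"
    and "card {\<theta>. poly f \<theta> = 0} = 6"
    and "poly_over K \<delta>" and "Aelem f \<delta>"
    and "\<exists>u. poly_over K u \<and> Aelem f u \<and> Amult f u \<delta> = 1"
  shows "(\<forall>\<omega> \<epsilon>. poly f \<omega> = 0 \<longrightarrow> Aelem f \<epsilon> \<longrightarrow> Amult f \<epsilon> \<epsilon> = \<delta> \<longrightarrow>
            act f (mu f \<omega>) (Psub f \<epsilon> \<omega>) = Psub f \<epsilon> \<omega>)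
       \<and> (\<forall>\<epsilon> \<epsilon>'. Aelem f \<epsilon> \<longrightarrow> Aelem f \<epsilon>' \<longrightarrow> Amult f \<epsilon> \<epsilon> = \<delta> \<longrightarrow> Amult f \<epsilon>' \<epsilon>' = \<delta> \<longrightarrow>
            ((Lsub f \<epsilon> \<noteq> Lsub f \<epsilon>' \<and> (\<exists>q. q \<noteq> 0 \<and> q \<in> Lsub f \<epsilon> \<inter> Lsub f \<epsilon>'))
               \<longleftrightarrow> (\<exists>\<omega>. poly f \<omega> = 0 \<and> act f (mu f \<omega>) (Lsub f \<epsilon>) = Lsub f \<epsilon>'))
          \<and> (\<forall>\<omega>. poly f \<omega> = 0 \<longrightarrow> act f (mu f \<omega>) (Lsub f \<epsilon>) = Lsub f \<epsilon>' \<longrightarrow>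
               Lsub f \<epsilon> \<inter> Lsub f \<epsilon>' = Psub f \<epsilon> \<omega> \<and> Psub f \<epsilon> \<omega> = Psub f \<epsilon>' \<omega>))"
proof -
  interpret split_separable f
    using assms(5,7) by unfold_locales simp_all
  have Aunit_sqrt: "Aunit f \<epsilon>" if "Amult f \<epsilon> \<epsilon> = \<delta>" for \<epsilon>
    using assms(10) that Aunit_Amult_right unfolding Aunit_def by blast
  have pair: "sqrt_pair f \<epsilon> \<epsilon>'" if "Amult f \<epsilon> \<epsilon> = \<delta>" "Amult f \<epsilon>' \<epsilon>' = \<delta>" for \<epsilon> \<epsilon>'
    using that assms(3,5) Aunit_sqrt by unfold_locales auto
  show ?thesis
    using act_mu_Psub Aunit_sqrt sqrt_pair.lines_meet_iff[OF pair] sqrt_pair.lines_meet_at[OF pair]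
    by auto
qed

end
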